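(* Let $H$ be a separable infinite-dimensional Hilbert space, let $\{u_t\}_{t\in\mathbb{R}}$ be a one-parameter group of unitaries in $B(H)$, and let $\{\alpha_t\}_{t\in\mathbb{R}}$ be the group of automorphisms of $B(H)$ given by $\alpha_t(A)=u_tAu_t^*$. Then $\{u_t\}_{t\in\mathbb{R}}$ is UEC as a family of maps $H_1\to H_1$ if and only if $\{\alpha_t\}_{t\in\mathbb{R}}$ is UEC as a family of maps $B_1\to B_1$.
   Context: $H_1$ is the closed unit ball of $H$ and $B_1$ the closed unit ball of $B(H)$. $H_1$ carries the (weak) uniformity whose basic entourages are the sets $\{(x,y)\in H_1\times H_1: |\langle x-y,z_i\rangle|<\epsilon,\ i=1,\dots,N\}$ with $z_i\in H_1$, $N\in\mathbb{N}$, $\epsilon>0$; $B_1$ carries the (weak operator) uniformity whose basic entourages are the sets $\{(A,B)\in B_1\times B_1: |\langle (A-B)w_i,z_i\rangle|<\epsilon,\ i=1,\dots,N\}$ with $w_i,z_i\in H_1$, $N\in\mathbb{N}$, $\epsilon>0$ (for separable $H$ these are the uniformities of the metrizable weak, resp. weak operator, topologies on these compact balls). A family $\mathcal{F}$ of maps from a uniform space $X$ to itself is uniformly equicontinuous (UEC) if for every entourage $U$ there is an entourage $W$ such that $(x,y)\in W$ implies $(f(x),f(y))\in U$ for all $f\in\mathcal{F}$. *)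

theory Defs
  imports "HOL-Analysis.Analysis"
begin

text \<open>A complex Hilbert space is modelled by a carrier type 'h (with its additive group
structure), a complex scalar multiplication sc and an inner product ip, linear in the
first argument and conjugate-linear in the second.\<close>

definition hnorm :: "('h \<Rightarrow> 'h \<Rightarrow> complex) \<Rightarrow> 'h \<Rightarrow> real" where
  "hnorm ip x = sqrt (Re (ip x x))"

definition hilbert_space ::
  "(complex \<Rightarrow> 'h::ab_group_add \<Rightarrow> 'h) \<Rightarrow> ('h \<Rightarrow> 'h \<Rightarrow> complex) \<Rightarrow> bool" where
  "hilbert_space sc ip \<longleftrightarrow>
     vector_space sc \<and>
     (\<forall>x y z. ip (x + y) z = ip x z + ip y z) \<and>
     (\<forall>a x y. ip (sc a x) y = a * ip x y) \<and>
     (\<forall>x y. ip y x = cnj (ip x y)) \<and>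
     (\<forall>x. 0 \<le> Re (ip x x)) \<and>
     (\<forall>x. ip x x = 0 \<longrightarrow> x = 0) \<and>
     (\<forall>X :: nat \<Rightarrow> 'h. (\<forall>e>0. \<exists>N. \<forall>m\<ge>N. \<forall>n\<ge>N. hnorm ip (X m - X n) < e) \<longrightarrow>
        (\<exists>L. (\<lambda>n. hnorm ip (X n - L)) \<longlonglongrightarrow> 0))"

definition separable_hs :: "('h::ab_group_add \<Rightarrow> 'h \<Rightarrow> complex) \<Rightarrow> bool" where
  "separable_hs ip \<longleftrightarrow> (\<exists>D. countable D \<and> (\<forall>x e. e > 0 \<longrightarrow> (\<exists>d\<in>D. hnorm ip (x - d) < e)))"

definition infinite_dimensional :: "(complex \<Rightarrow> 'h::ab_group_add \<Rightarrow> 'h) \<Rightarrow> bool" where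
  "infinite_dimensional sc \<longleftrightarrow> \<not> (\<exists>B. finite B \<and> module.span sc B = UNIV)"

definition bounded_op ::
  "(complex \<Rightarrow> 'h::ab_group_add \<Rightarrow> 'h) \<Rightarrow> ('h \<Rightarrow> 'h \<Rightarrow> complex) \<Rightarrow> ('h \<Rightarrow> 'h) \<Rightarrow> bool" where
  "bounded_op sc ip T \<longleftrightarrow>
     (\<forall>x y. T (x + y) = T x + T y) \<and> (\<forall>a x. T (sc a x) = sc a (T x)) \<and>
     (\<exists>C. \<forall>x. hnorm ip (T x) \<le> C * hnorm ip x)"

definition op_norm :: "('h \<Rightarrow> 'h \<Rightarrow> complex) \<Rightarrow> ('h \<Rightarrow> 'h) \<Rightarrow> real" where
  "op_norm ip T = Sup {hnorm ip (T x) | x. hnorm ip x \<le> 1}"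

definition adjoint :: "('h \<Rightarrow> 'h \<Rightarrow> complex) \<Rightarrow> ('h \<Rightarrow> 'h) \<Rightarrow> ('h \<Rightarrow> 'h)" where
  "adjoint ip T = (THE S. \<forall>x y. ip (T x) y = ip x (S y))"

definition unitary_op ::
  "(complex \<Rightarrow> 'h::ab_group_add \<Rightarrow> 'h) \<Rightarrow> ('h \<Rightarrow> 'h \<Rightarrow> complex) \<Rightarrow> ('h \<Rightarrow> 'h) \<Rightarrow> bool" where
  "unitary_op sc ip U \<longleftrightarrow> bounded_op sc ip U \<and> surj U \<and> (\<forall>x y. ip (U x) (U y) = ip x y)"

definition one_param_unitary_group ::
  "(complex \<Rightarrow> 'h::ab_group_add \<Rightarrow> 'h) \<Rightarrow> ('h \<Rightarrow> 'h \<Rightarrow> complex) \<Rightarrow> (real \<Rightarrow> 'h \<Rightarrow> 'h) \<Rightarrow> bool" where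
  "one_param_unitary_group sc ip u \<longleftrightarrow>
     (\<forall>t. unitary_op sc ip (u t)) \<and> u 0 = id \<and> (\<forall>s t. u (s + t) = u s \<circ> u t)"

definition H1 :: "('h \<Rightarrow> 'h \<Rightarrow> complex) \<Rightarrow> 'h set" where
  "H1 ip = {x. hnorm ip x \<le> 1}"

definition B1 ::
  "(complex \<Rightarrow> 'h::ab_group_add \<Rightarrow> 'h) \<Rightarrow> ('h \<Rightarrow> 'h \<Rightarrow> complex) \<Rightarrow> ('h \<Rightarrow> 'h) set" where
  "B1 sc ip = {A. bounded_op sc ip A \<and> op_norm ip A \<le> 1}"

text \<open>Basic entourages of the weak uniformity on H_1.\<close>
definition weak_basic :: "('h::ab_group_add \<Rightarrow> 'h \<Rightarrow> complex) \<Rightarrow> ('h \<times> 'h) set set" where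
  "weak_basic ip = {{(x, y). x \<in> H1 ip \<and> y \<in> H1 ip \<and> (\<forall>i<N. cmod (ip (x - y) (z i)) < e)}
                      | (z :: nat \<Rightarrow> 'h) (N :: nat) (e :: real). (\<forall>i<N. z i \<in> H1 ip) \<and> e > 0}"

text \<open>Basic entourages of the weak operator uniformity on B_1.\<close>
definition wot_basic ::
  "(complex \<Rightarrow> 'h::ab_group_add \<Rightarrow> 'h) \<Rightarrow> ('h \<Rightarrow> 'h \<Rightarrow> complex) \<Rightarrow> (('h \<Rightarrow> 'h) \<times> ('h \<Rightarrow> 'h)) set set" where
  "wot_basic sc ip = {{(A, B). A \<in> B1 sc ip \<and> B \<in> B1 sc ip \<and>
                          (\<forall>i<N. cmod (ip (A (w i) - B (w i)) (z i)) < e)}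
                      | (w :: nat \<Rightarrow> 'h) (z :: nat \<Rightarrow> 'h) (N :: nat) (e :: real). (\<forall>i<N. w i \<in> H1 ip \<and> z i \<in> H1 ip) \<and> e > 0}"

definition entourages :: "'a set \<Rightarrow> ('a \<times> 'a) set set \<Rightarrow> ('a \<times> 'a) set set" where
  "entourages X Bs = {U. U \<subseteq> X \<times> X \<and> (\<exists>V\<in>Bs. V \<subseteq> U)}"

definition UEC :: "'a set \<Rightarrow> ('a \<times> 'a) set set \<Rightarrow> ('a \<Rightarrow> 'a) set \<Rightarrow> bool" where
  "UEC X Bs F \<longleftrightarrow>
     (\<forall>U\<in>entourages X Bs. \<exists>W\<in>entourages X Bs. \<forall>f\<in>F. \<forall>x y. (x, y) \<in> W \<longrightarrow> (f x, f y) \<in> U)"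

end

theory Submission
  imports Defs
begin

(*
  Proof idea.  Write alpha_t(A) = u_t A u_t^* = u_t A u_{-t}.

  (alpha UEC ==> u UEC)  Fix a unit vector w0.  For a unit vector xi the rank-one
  contractions R_p = <., xi> p depend on p in H_1 in a weak-to-weak-operator
  uniformly continuous way, and alpha_t(R_p)(w0) = u_t p when xi = u_{-t} w0.
  Hence uniform equicontinuity of the alpha_t, tested on the single vector w0,
  yields uniform equicontinuity of the u_t.

  (u UEC ==> alpha UEC)  Uniform equicontinuity of the u_t at the pair (p, 0)
  says: finitely many vectors f_j can be chosen such that every p in H_1
  orthogonal to all f_j has |<p, u_t y>| < eps for all t and for the finitely
  many test vectors y.  By Gram-Schmidt the f_j span a finite orthonormal family
  E, and then every orbit vector u_t y lies within eps of span E, uniformly in t.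
  A weak operator condition on the finitely many matrix entries <(A - B) E_l, E_k>
  then controls <(A - B) u_{-t} w, u_{-t} z> = <(alpha_t A - alpha_t B) w, z>.
*)

section \<open>Inner product algebra\<close>

text \<open>The working context: a complex vector space with an inner product satisfying the
  axioms of hilbert_space (completeness is never used below).\<close>
locale hilbert =
  fixes sc :: "complex \<Rightarrow> 'h::ab_group_add \<Rightarrow> 'h" and ip :: "'h \<Rightarrow> 'h \<Rightarrow> complex"
  assumes hilbert: "hilbert_space sc ip"
begin

sublocale vector_space sc
  using hilbert unfolding hilbert_space_def by (elim conjE)

lemma ip_add_left: "ip (x + y) z = ip x z + ip y z"
  using hilbert unfolding hilbert_space_def by (elim conjE allE) assumption

lemma ip_scale_left: "ip (sc a x) y = a * ip x y"
  using hilbert unfolding hilbert_space_def by (elim conjE allE) assumption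

lemma ip_conj_sym: "ip y x = cnj (ip x y)"
  using hilbert unfolding hilbert_space_def by (elim conjE allE) assumption

lemma ip_self_nonneg: "0 \<le> Re (ip x x)"
  using hilbert unfolding hilbert_space_def by (elim conjE allE) assumption

lemma ip_self_eq_0: "ip x x = 0 \<Longrightarrow> x = 0"
  using hilbert unfolding hilbert_space_def by (elim conjE allE) (erule mp)

interpretation ip_left: additive "\<lambda>x. ip x y" for y
  by standard (rule ip_add_left)

lemma ip_sum_left: "ip (sum g A) y = (\<Sum>k\<in>A. ip (g k) y)"
  by (rule ip_left.sum)

lemma ip_diff_left: "ip (x - x') y = ip x y - ip x' y"
  by (rule ip_left.diff)

lemma ip_zero_left [simp]: "ip 0 y = 0"
  by (rule ip_left.zero)

lemma ip_add_right: "ip z (x + y) = ip z x + ip z y"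
  using ip_conj_sym[of z "x + y"] ip_conj_sym[of z x] ip_conj_sym[of z y]
  by (simp add: ip_add_left)

lemma ip_scale_right: "ip x (sc a y) = cnj a * ip x y"
  using ip_conj_sym[of x "sc a y"] ip_conj_sym[of x y] by (simp add: ip_scale_left)

lemma ip_diff_right: "ip y (x - x') = ip y x - ip y x'"
  using ip_conj_sym[of y "x - x'"] ip_conj_sym[of y x] ip_conj_sym[of y x']
  by (simp add: ip_diff_left)

lemma ip_sum_right: "ip y (sum g A) = (\<Sum>k\<in>A. ip y (g k))"
proof -
  have "ip y (sum g A) = cnj (\<Sum>k\<in>A. ip (g k) y)"
    by (subst ip_conj_sym) (simp add: ip_sum_left)
  also have "\<dots> = (\<Sum>k\<in>A. ip y (g k))"
    by (simp add: ip_conj_sym[of _ y])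
  finally show ?thesis .
qed

lemma ip_zero_right [simp]: "ip y 0 = 0"
  using ip_conj_sym[of 0 y] by simp

lemma ip_ext: "(\<And>x. ip x a = ip x b) \<Longrightarrow> a = b"
  using ip_self_eq_0[of "a - b"] by (simp add: ip_diff_right)

section \<open>The norm and the Cauchy-Schwarz inequality\<close>

lemma hnorm_nonneg: "0 \<le> hnorm ip x"
  using ip_self_nonneg[of x] by (simp add: hnorm_def)

lemma hnorm_sq: "(hnorm ip x)\<^sup>2 = Re (ip x x)"
  using ip_self_nonneg[of x] by (simp add: hnorm_def)

lemma ip_self_hnorm: "ip x x = complex_of_real ((hnorm ip x)\<^sup>2)"
proof -
  have "Im (ip x x) = 0"
    using arg_cong[OF ip_conj_sym[of x x], of Im] by simp
  then show ?thesis
    using ip_self_nonneg[of x] by (simp add: hnorm_def complex_eq_iff)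
qed

lemma hnorm_eq_0: "hnorm ip x = 0 \<longleftrightarrow> x = 0"
proof
  assume "hnorm ip x = 0"
  then show "x = 0"
    using ip_self_hnorm[of x] by (simp add: ip_self_eq_0)
qed (simp add: hnorm_def)

lemma hnorm_pos: "x \<noteq> 0 \<Longrightarrow> 0 < hnorm ip x"
  using hnorm_eq_0[of x] hnorm_nonneg[of x] by linarith

lemma hnorm_zero [simp]: "hnorm ip 0 = 0"
  by (simp add: hnorm_eq_0)

lemma zero_in_H1: "0 \<in> H1 ip"
  by (simp add: H1_def)

lemma hnorm_scale: "hnorm ip (sc a x) = cmod a * hnorm ip x"
proof -
  have "ip (sc a x) (sc a x) = (a * cnj a) * ip x x"
    by (simp add: ip_scale_left ip_scale_right)
  also have "a * cnj a = complex_of_real ((cmod a)\<^sup>2)"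
    by (rule complex_norm_square[symmetric])
  finally have "(hnorm ip (sc a x))\<^sup>2 = (cmod a * hnorm ip x)\<^sup>2"
    by (simp add: hnorm_sq power_mult_distrib)
  then show ?thesis
    by (simp add: hnorm_nonneg power2_eq_iff_nonneg)
qed

lemma pythagoras:
  assumes "ip a b = 0"
  shows "(hnorm ip (a + b))\<^sup>2 = (hnorm ip a)\<^sup>2 + (hnorm ip b)\<^sup>2"
proof -
  have "ip b a = 0"
    using assms ip_conj_sym[of b a] by simp
  with assms show ?thesis
    by (simp add: hnorm_sq ip_add_left ip_add_right)
qed

definition hnormalize :: "'h \<Rightarrow> 'h" where
  "hnormalize x = sc (complex_of_real (1 / hnorm ip x)) x"

lemma hnorm_normalize: "x \<noteq> 0 \<Longrightarrow> hnorm ip (hnormalize x) = 1"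
  using hnorm_pos[of x] by (simp add: hnormalize_def hnorm_scale norm_divide)

lemma ip_normalize_left: "ip (hnormalize x) y = complex_of_real (1 / hnorm ip x) * ip x y"
  by (simp add: hnormalize_def ip_scale_left)

lemma scale_normalize: "x \<noteq> 0 \<Longrightarrow> sc (complex_of_real (hnorm ip x)) (hnormalize x) = x"
  using hnorm_pos[of x] by (simp add: hnormalize_def)

text \<open>Cauchy-Schwarz, first against a unit vector (by Pythagoras applied to the
  component of x orthogonal to e), then in general by normalization.\<close>
lemma cauchy_schwarz_unit:
  assumes "hnorm ip e = 1"
  shows "cmod (ip x e) \<le> hnorm ip x"
proof -
  define c where "c = ip x e"
  have ee: "ip e e = 1"
    using assms ip_self_hnorm[of e] by simp
  have "ip (x - sc c e) (sc c e) = 0"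
    by (simp add: ip_diff_left ip_scale_left ip_scale_right ee c_def)
  from pythagoras[OF this]
  have "(hnorm ip x)\<^sup>2 = (hnorm ip (x - sc c e))\<^sup>2 + (cmod c)\<^sup>2"
    using assms by (simp add: hnorm_scale)
  then have "(cmod c)\<^sup>2 \<le> (hnorm ip x)\<^sup>2"
    by simp
  then show ?thesis
    unfolding c_def by (rule power2_le_imp_le[OF _ hnorm_nonneg])
qed

lemma cauchy_schwarz: "cmod (ip x y) \<le> hnorm ip x * hnorm ip y"
proof (cases "y = 0")
  case False
  have "ip x y = complex_of_real (hnorm ip y) * ip x (hnormalize y)"
    using ip_scale_right[of x "complex_of_real (hnorm ip y)" "hnormalize y"]
    by (simp add: scale_normalize[OF False])
  then have "cmod (ip x y) = hnorm ip y * cmod (ip x (hnormalize y))"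
    by (simp add: norm_mult hnorm_nonneg)
  also have "\<dots> \<le> hnorm ip y * hnorm ip x"
    by (intro mult_left_mono cauchy_schwarz_unit hnorm_normalize False hnorm_nonneg)
  finally show ?thesis
    by (simp add: mult.commute)
qed simp

lemma cmod_ip_le_1: "hnorm ip x \<le> 1 \<Longrightarrow> hnorm ip y \<le> 1 \<Longrightarrow> cmod (ip x y) \<le> 1"
  using cauchy_schwarz[of x y] mult_mono[of "hnorm ip x" 1 "hnorm ip y" 1]
  by (simp add: hnorm_nonneg)

lemma unit_vector_exists:
  assumes "infinite_dimensional sc"
  obtains w where "hnorm ip w = 1"
proof -
  have "\<exists>x::'h. x \<noteq> 0"
  proof (rule ccontr)
    assume "\<nexists>x::'h. x \<noteq> 0"
    then have "span ({}::'h set) = UNIV"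
      by (auto simp: span_empty)
    then show False
      using assms unfolding infinite_dimensional_def by blast
  qed
  then show ?thesis
    using hnorm_normalize that by blast
qed

section \<open>Finite orthonormal families and orthogonal projections\<close>

definition orthonormal :: "nat \<Rightarrow> (nat \<Rightarrow> 'h) \<Rightarrow> bool" where
  "orthonormal m E \<longleftrightarrow>
     (\<forall>k<m. ip (E k) (E k) = 1) \<and> (\<forall>k<m. \<forall>l<m. k \<noteq> l \<longrightarrow> ip (E k) (E l) = 0)"

definition proj :: "nat \<Rightarrow> (nat \<Rightarrow> 'h) \<Rightarrow> 'h \<Rightarrow> 'h" where
  "proj m E y = (\<Sum>k<m. sc (ip y (E k)) (E k))"

lemma orthonormal_hnorm: "orthonormal m E \<Longrightarrow> k < m \<Longrightarrow> hnorm ip (E k) = 1"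
  unfolding orthonormal_def hnorm_def by simp

lemma ip_proj_basis:
  assumes "orthonormal m E" "j < m"
  shows "ip (proj m E y) (E j) = ip y (E j)"
proof -
  have "ip (proj m E y) (E j) = (\<Sum>k<m. ip y (E k) * ip (E k) (E j))"
    by (simp add: proj_def ip_sum_left ip_scale_left)
  also have "\<dots> = (\<Sum>k<m. if k = j then ip y (E j) else 0)"
    using assms unfolding orthonormal_def by (intro sum.cong) auto
  finally show ?thesis
    using assms(2) by simp
qed

lemma residual_orthogonal:
  "orthonormal m E \<Longrightarrow> j < m \<Longrightarrow> ip (y - proj m E y) (E j) = 0"
  by (simp add: ip_diff_left ip_proj_basis)

lemma ip_proj_orthogonal: "(\<forall>k<m. ip v (E k) = 0) \<Longrightarrow> ip v (proj m E y) = 0"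
  by (simp add: proj_def ip_sum_right ip_scale_right)

lemma hnorm_proj_le:
  assumes "orthonormal m E"
  shows "hnorm ip (proj m E y) \<le> hnorm ip y"
proof -
  have "ip (y - proj m E y) (proj m E y) = 0"
    using residual_orthogonal[OF assms] by (intro ip_proj_orthogonal) blast
  from pythagoras[OF this]
  have "(hnorm ip y)\<^sup>2 = (hnorm ip (y - proj m E y))\<^sup>2 + (hnorm ip (proj m E y))\<^sup>2"
    by simp
  then have "(hnorm ip (proj m E y))\<^sup>2 \<le> (hnorm ip y)\<^sup>2"
    by simp
  then show ?thesis
    by (rule power2_le_imp_le[OF _ hnorm_nonneg])
qed

lemma orthonormal_append:
  assumes E: "orthonormal m E" and e: "ip e e = 1" and perp: "\<forall>k<m. ip e (E k) = 0"
  shows "orthonormal (Suc m) (E(m := e))"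
proof -
  have perp': "ip (E k) e = 0" if "k < m" for k
    using perp that ip_conj_sym[of "E k" e] by simp
  show ?thesis
    using E e perp perp' unfolding orthonormal_def by (auto simp: less_Suc_eq)
qed

lemma orthonormal_extend:
  assumes E: "orthonormal m E"
  obtains m' E' where "orthonormal m' E'"
    and "\<And>v. \<forall>k<m'. ip v (E' k) = 0 \<Longrightarrow> (\<forall>k<m. ip v (E k) = 0) \<and> ip v x = 0"
proof (cases "x = proj m E x")
  case True
  show ?thesis
  proof (rule that[OF E])
    fix v assume "\<forall>k<m. ip v (E k) = 0"
    then show "(\<forall>k<m. ip v (E k) = 0) \<and> ip v x = 0"
      using ip_proj_orthogonal True by metis
  qed
next
  case False
  define r where "r = x - proj m E x"
  have r: "r \<noteq> 0"
    using False by (simp add: r_def)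
  have r_perp: "\<forall>k<m. ip r (E k) = 0"
    using residual_orthogonal[OF E] by (simp add: r_def)
  have "ip (hnormalize r) (hnormalize r) = 1"
    using ip_self_hnorm[of "hnormalize r"] hnorm_normalize[OF r] by simp
  moreover have "\<forall>k<m. ip (hnormalize r) (E k) = 0"
    using r_perp by (simp add: ip_normalize_left)
  ultimately have E': "orthonormal (Suc m) (E(m := hnormalize r))"
    by (rule orthonormal_append[OF E])
  show ?thesis
  proof (rule that[OF E'])
    fix v assume v: "\<forall>k<Suc m. ip v ((E(m := hnormalize r)) k) = 0"
    then have vE: "\<forall>k<m. ip v (E k) = 0"
      by (metis fun_upd_other less_Suc_eq nat_neq_iff)
    have "ip v (hnormalize r) = 0"
      using v by (metis fun_upd_same lessI)
    then have "ip v r = 0"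
      using arg_cong[OF scale_normalize[OF r], of "ip v"] by (simp add: ip_scale_right)
    moreover have "ip v x = ip v r + ip v (proj m E x)"
      using ip_add_right[of v r "proj m E x"] by (simp add: r_def)
    ultimately have "ip v x = 0"
      using ip_proj_orthogonal[OF vE, of x] by simp
    with vE show "(\<forall>k<m. ip v (E k) = 0) \<and> ip v x = 0"
      by blast
  qed
qed

lemma gram_schmidt:
  fixes n :: nat
  obtains m E where "orthonormal m E"
    and "\<And>v. \<forall>k<m. ip v (E k) = 0 \<Longrightarrow> \<forall>j<n. ip v (f j) = 0"
proof -
  have "\<exists>m E. orthonormal m E \<and> (\<forall>v. (\<forall>k<m. ip v (E k) = 0) \<longrightarrow> (\<forall>j<n. ip v (f j) = 0))"
  proof (induction n)
    case 0
    have "orthonormal 0 E" for E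
      by (simp add: orthonormal_def)
    then show ?case
      by blast
  next
    case (Suc n)
    then obtain m E where E: "orthonormal m E"
      and perp: "\<forall>v. (\<forall>k<m. ip v (E k) = 0) \<longrightarrow> (\<forall>j<n. ip v (f j) = 0)"
      by blast
    obtain m' E' where "orthonormal m' E'"
      and "\<And>v. \<forall>k<m'. ip v (E' k) = 0 \<Longrightarrow> (\<forall>k<m. ip v (E k) = 0) \<and> ip v (f n) = 0"
      using orthonormal_extend[OF E] by blast
    then show ?case
      using perp by (metis less_Suc_eq)
  qed
  then show ?thesis
    using that by blast
qed

text \<open>If every unit vector orthogonal to the family E has small inner product with a,
  then a is close to its projection: test with the normalized residual.\<close>
lemma residual_small:
  assumes E: "orthonormal m E" and eps: "0 < \<epsilon>"
    and small: "\<And>p. p \<in> H1 ip \<Longrightarrow> \<forall>k<m. ip p (E k) = 0 \<Longrightarrow> cmod (ip p a) < \<epsilon>"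
  shows "hnorm ip (a - proj m E a) < \<epsilon>"
proof (cases "a - proj m E a = 0")
  case False
  define r where "r = a - proj m E a"
  have r: "r \<noteq> 0"
    using False by (simp add: r_def)
  have r_perp: "\<forall>k<m. ip r (E k) = 0"
    using residual_orthogonal[OF E] by (simp add: r_def)
  have "hnormalize r \<in> H1 ip"
    using hnorm_normalize[OF r] by (simp add: H1_def)
  moreover have "\<forall>k<m. ip (hnormalize r) (E k) = 0"
    using r_perp by (simp add: ip_normalize_left)
  ultimately have "cmod (ip (hnormalize r) a) < \<epsilon>"
    by (rule small)
  moreover have "ip r a = ip r r"
    using ip_proj_orthogonal[OF r_perp, of a] ip_add_right[of r r "proj m E a"]
    by (simp add: r_def)
  then have "cmod (ip (hnormalize r) a) = hnorm ip r"
    using hnorm_pos[OF r]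
    by (simp add: ip_normalize_left ip_self_hnorm norm_mult norm_divide power2_eq_square)
  ultimately show ?thesis
    by (simp add: r_def)
qed (simp add: eps)

section \<open>The unit ball of B(H)\<close>

lemma bounded_op_module_hom: "bounded_op sc ip T \<Longrightarrow> module_hom sc sc T"
  by (simp add: bounded_op_def module_hom_iff module_axioms)

lemma op_norm_bound:
  assumes T: "bounded_op sc ip T"
  shows "hnorm ip (T x) \<le> op_norm ip T * hnorm ip x"
proof (cases "x = 0")
  case True
  then show ?thesis
    using module_hom.zero[OF bounded_op_module_hom[OF T]] by simp
next
  case False
  define S where "S = {hnorm ip (T y) |y. hnorm ip y \<le> 1}"
  obtain C where C: "\<And>y. hnorm ip (T y) \<le> C * hnorm ip y"
    using T unfolding bounded_op_def by blast
  have "bdd_above S"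
  proof (rule bdd_aboveI)
    fix s assume "s \<in> S"
    then obtain y where s: "s = hnorm ip (T y)" and y: "hnorm ip y \<le> 1"
      by (auto simp: S_def)
    have "C * hnorm ip y \<le> \<bar>C\<bar> * hnorm ip y"
      by (rule mult_right_mono) (simp_all add: hnorm_nonneg)
    also have "\<dots> \<le> \<bar>C\<bar>"
      using y by (simp add: mult_left_le)
    finally show "s \<le> \<bar>C\<bar>"
      using C[of y] s by linarith
  qed
  moreover have "hnorm ip (T (hnormalize x)) \<in> S"
    using hnorm_normalize[OF False] unfolding S_def by auto
  ultimately have "hnorm ip (T (hnormalize x)) \<le> op_norm ip T"
    unfolding op_norm_def S_def[symmetric] by (rule cSup_upper[rotated])
  moreover have "hnorm ip (T (hnormalize x)) = hnorm ip (T x) / hnorm ip x"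
    using module_hom.scale[OF bounded_op_module_hom[OF T]] hnorm_pos[OF False]
    by (simp add: hnormalize_def hnorm_scale norm_divide)
  ultimately show ?thesis
    using hnorm_pos[OF False] by (simp add: divide_le_eq)
qed

lemma B1_iff: "T \<in> B1 sc ip \<longleftrightarrow> module_hom sc sc T \<and> (\<forall>x. hnorm ip (T x) \<le> hnorm ip x)"
proof
  assume T: "T \<in> B1 sc ip"
  then have b: "bounded_op sc ip T" and n: "op_norm ip T \<le> 1"
    by (auto simp: B1_def)
  have "hnorm ip (T x) \<le> hnorm ip x" for x
    using op_norm_bound[OF b, of x] mult_right_mono[OF n hnorm_nonneg[of x]] by simp
  then show "module_hom sc sc T \<and> (\<forall>x. hnorm ip (T x) \<le> hnorm ip x)"
    using bounded_op_module_hom[OF b] by blast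
next
  assume T: "module_hom sc sc T \<and> (\<forall>x. hnorm ip (T x) \<le> hnorm ip x)"
  then have b: "bounded_op sc ip T"
    unfolding bounded_op_def module_hom_iff by (metis mult_1)
  have "op_norm ip T \<le> 1"
    unfolding op_norm_def
  proof (rule cSup_least)
    show "{hnorm ip (T x) |x. hnorm ip x \<le> 1} \<noteq> {}"
      by (auto intro: exI[of _ 0])
  next
    fix s assume "s \<in> {hnorm ip (T x) |x. hnorm ip x \<le> 1}"
    then obtain x where "s = hnorm ip (T x)" and "hnorm ip x \<le> 1"
      by blast
    with T show "s \<le> 1"
      by (metis order_trans)
  qed
  with b show "T \<in> B1 sc ip"
    by (simp add: B1_def)
qed

lemma B1_contraction: "T \<in> B1 sc ip \<Longrightarrow> hnorm ip (T x) \<le> hnorm ip x"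
  by (simp add: B1_iff)

lemma ip_diff_B1_bound:
  assumes "A \<in> B1 sc ip" "B \<in> B1 sc ip"
  shows "cmod (ip (A x - B x) y) \<le> 2 * (hnorm ip x * hnorm ip y)"
proof -
  have single: "cmod (ip (T x) y) \<le> hnorm ip x * hnorm ip y" if "T \<in> B1 sc ip" for T
    using cauchy_schwarz[of "T x" y] mult_right_mono[OF B1_contraction[OF that] hnorm_nonneg]
    by (rule order_trans)
  have "cmod (ip (A x) y - ip (B x) y) \<le> 2 * (hnorm ip x * hnorm ip y)"
    using norm_triangle_ineq4[of "ip (A x) y" "ip (B x) y"] single[OF assms(1)] single[OF assms(2)]
    by linarith
  then show ?thesis
    by (simp add: ip_diff_left)
qed

lemma rank_one_B1:
  assumes "hnorm ip \<xi> \<le> 1" "hnorm ip p \<le> 1"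
  shows "(\<lambda>v. sc (ip v \<xi>) p) \<in> B1 sc ip"
  unfolding B1_iff
proof (intro conjI allI)
  show "module_hom sc sc (\<lambda>v. sc (ip v \<xi>) p)"
    by (simp add: module_hom_iff module_axioms ip_add_left ip_scale_left scale_left_distrib)
next
  fix v
  have "hnorm ip (sc (ip v \<xi>) p) \<le> (hnorm ip v * hnorm ip \<xi>) * hnorm ip p"
    unfolding hnorm_scale by (intro mult_right_mono cauchy_schwarz hnorm_nonneg)
  also have "\<dots> \<le> hnorm ip v"
    using assms hnorm_nonneg[of v] hnorm_nonneg[of \<xi>] hnorm_nonneg[of p]
    by (simp add: mult_le_one mult_left_le mult.assoc)
  finally show "hnorm ip (sc (ip v \<xi>) p) \<le> hnorm ip v" .
qed

text \<open>Compressing a linear map to the span of E: its matrix there has m^2 entries,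
  each multiplied by coefficients of modulus at most 1.\<close>
lemma proj_matrix_bound:
  assumes D: "module_hom sc sc D" and E: "orthonormal m E"
    and a: "hnorm ip a \<le> 1" and b: "hnorm ip b \<le> 1"
    and entries: "\<forall>l<m. \<forall>k<m. cmod (ip (D (E l)) (E k)) \<le> \<delta>"
  shows "cmod (ip (D (proj m E a)) (proj m E b)) \<le> real (m * m) * \<delta>"
proof -
  have coeff: "cmod (ip x (E k)) \<le> 1" if "hnorm ip x \<le> 1" "k < m" for x k
    using that orthonormal_hnorm[OF E] by (simp add: cmod_ip_le_1)
  have "ip (D (proj m E a)) (proj m E b) =
      (\<Sum>l<m. \<Sum>k<m. ip a (E l) * cnj (ip b (E k)) * ip (D (E l)) (E k))"
    by (simp add: proj_def module_hom.sum[OF D] module_hom.scale[OF D] ip_sum_left ip_sum_right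
        ip_scale_left ip_scale_right sum_distrib_left mult_ac) (rule sum.swap)
  also have "cmod \<dots> \<le> (\<Sum>l<m. \<Sum>k<m. cmod (ip a (E l) * cnj (ip b (E k)) * ip (D (E l)) (E k)))"
    by (rule order.trans[OF norm_sum sum_mono]) (rule norm_sum)
  also have "\<dots> \<le> (\<Sum>l<m. \<Sum>k<m. \<delta>)"
  proof (intro sum_mono)
    fix l k assume "l \<in> {..<m}" "k \<in> {..<m}"
    then show "cmod (ip a (E l) * cnj (ip b (E k)) * ip (D (E l)) (E k)) \<le> \<delta>"
      using coeff[OF a, of l] coeff[OF b, of k] entries
      by (simp add: norm_mult) (meson mult_le_one mult_left_le_one_le mult_nonneg_nonneg
          norm_ge_zero order_trans)
  qed
  finally show ?thesis
    by simp
qed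

lemma wot_estimate:
  assumes AB: "A \<in> B1 sc ip" "B \<in> B1 sc ip" and E: "orthonormal m E"
    and a: "hnorm ip a \<le> 1" and b: "hnorm ip b \<le> 1"
    and ra: "hnorm ip (a - proj m E a) \<le> \<epsilon>" and rb: "hnorm ip (b - proj m E b) \<le> \<epsilon>"
    and entries: "\<forall>l<m. \<forall>k<m. cmod (ip (A (E l) - B (E l)) (E k)) \<le> \<delta>"
  shows "cmod (ip (A a - B a) b) \<le> 4 * \<epsilon> + real (m * m) * \<delta>"
proof -
  define D where "D = (\<lambda>v. A v - B v)"
  define Pa Pb where "Pa = proj m E a" and "Pb = proj m E b"
  have D: "module_hom sc sc D"
    using AB unfolding B1_iff D_def by (simp add: module_hom_iff scale_right_diff_distrib)
  have Pa: "hnorm ip Pa \<le> 1"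
    using hnorm_proj_le[OF E, of a] a by (simp add: Pa_def)
  have ra': "hnorm ip (a - Pa) \<le> \<epsilon>" and rb': "hnorm ip (b - Pb) \<le> \<epsilon>"
    using ra rb by (simp_all add: Pa_def Pb_def)
  have eps: "0 \<le> \<epsilon>"
    using ra' hnorm_nonneg order_trans by blast
  have split: "ip (D a) b = ip (D Pa) Pb + ip (D (a - Pa)) b + ip (D Pa) (b - Pb)"
    using module_hom.diff[OF D, of a Pa] by (simp add: ip_diff_left ip_diff_right)
  have bound_a: "cmod (ip (D (a - Pa)) b) \<le> 2 * \<epsilon>"
  proof -
    have "cmod (ip (D (a - Pa)) b) \<le> 2 * (hnorm ip (a - Pa) * hnorm ip b)"
      unfolding D_def by (rule ip_diff_B1_bound[OF AB])
    also have "\<dots> \<le> 2 * (\<epsilon> * 1)"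
      using ra' b eps hnorm_nonneg by (intro mult_left_mono mult_mono) auto
    finally show ?thesis
      by simp
  qed
  have bound_b: "cmod (ip (D Pa) (b - Pb)) \<le> 2 * \<epsilon>"
  proof -
    have "cmod (ip (D Pa) (b - Pb)) \<le> 2 * (hnorm ip Pa * hnorm ip (b - Pb))"
      unfolding D_def by (rule ip_diff_B1_bound[OF AB])
    also have "\<dots> \<le> 2 * (1 * \<epsilon>)"
      using Pa rb' hnorm_nonneg by (intro mult_left_mono mult_mono) auto
    finally show ?thesis
      by simp
  qed
  have bound_P: "cmod (ip (D Pa) Pb) \<le> real (m * m) * \<delta>"
    unfolding Pa_def Pb_def using entries
    by (intro proj_matrix_bound[OF D E a b]) (simp add: D_def)
  have "cmod (ip (D a) b) \<le> cmod (ip (D Pa) Pb) + cmod (ip (D (a - Pa)) b) + cmod (ip (D Pa) (b - Pb))"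
    unfolding split by (rule order_trans[OF norm_triangle_ineq add_right_mono[OF norm_triangle_ineq]])
  with bound_a bound_b bound_P have "cmod (ip (D a) b) \<le> 4 * \<epsilon> + real (m * m) * \<delta>"
    by linarith
  then show ?thesis
    by (simp add: D_def)
qed

end

section \<open>Basic entourages\<close>

definition weak_ent :: "('h::ab_group_add \<Rightarrow> 'h \<Rightarrow> complex) \<Rightarrow> (nat \<Rightarrow> 'h) \<Rightarrow> nat \<Rightarrow> real \<Rightarrow> ('h \<times> 'h) set"
  where "weak_ent ip z N e = {(x, y). x \<in> H1 ip \<and> y \<in> H1 ip \<and> (\<forall>i<N. cmod (ip (x - y) (z i)) < e)}"

definition wot_ent ::
  "(complex \<Rightarrow> 'h::ab_group_add \<Rightarrow> 'h) \<Rightarrow> ('h \<Rightarrow> 'h \<Rightarrow> complex) \<Rightarrow> (nat \<Rightarrow> 'h) \<Rightarrow> (nat \<Rightarrow> 'h) \<Rightarrow>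
    nat \<Rightarrow> real \<Rightarrow> (('h \<Rightarrow> 'h) \<times> ('h \<Rightarrow> 'h)) set"
  where "wot_ent sc ip w z N e = {(A, B). A \<in> B1 sc ip \<and> B \<in> B1 sc ip \<and>
                                   (\<forall>i<N. cmod (ip (A (w i) - B (w i)) (z i)) < e)}"

lemma weak_basic_iff:
  "V \<in> weak_basic ip \<longleftrightarrow> (\<exists>z N e. (\<forall>i<N. z i \<in> H1 ip) \<and> 0 < e \<and> V = weak_ent ip z N e)"
  unfolding weak_basic_def weak_ent_def by blast

lemma wot_basic_iff:
  "V \<in> wot_basic sc ip \<longleftrightarrow>
     (\<exists>w z N e. (\<forall>i<N. w i \<in> H1 ip \<and> z i \<in> H1 ip) \<and> 0 < e \<and> V = wot_ent sc ip w z N e)"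
  unfolding wot_basic_def wot_ent_def by blast

lemma weak_ent_basic: "\<forall>i<N. z i \<in> H1 ip \<Longrightarrow> 0 < e \<Longrightarrow> weak_ent ip z N e \<in> weak_basic ip"
  unfolding weak_basic_iff by blast

lemma wot_ent_basic:
  "\<forall>i<N. w i \<in> H1 ip \<and> z i \<in> H1 ip \<Longrightarrow> 0 < e \<Longrightarrow> wot_ent sc ip w z N e \<in> wot_basic sc ip"
  unfolding wot_basic_iff by blast

lemma UEC_basic_iff:
  assumes "\<And>V. V \<in> Bs \<Longrightarrow> V \<subseteq> X \<times> X"
  shows "UEC X Bs F \<longleftrightarrow> (\<forall>V\<in>Bs. \<exists>W\<in>Bs. \<forall>f\<in>F. \<forall>x y. (x, y) \<in> W \<longrightarrow> (f x, f y) \<in> V)"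
proof
  assume uec: "UEC X Bs F"
  show "\<forall>V\<in>Bs. \<exists>W\<in>Bs. \<forall>f\<in>F. \<forall>x y. (x, y) \<in> W \<longrightarrow> (f x, f y) \<in> V"
  proof
    fix V assume "V \<in> Bs"
    with assms have "V \<in> entourages X Bs"
      by (auto simp: entourages_def)
    then obtain W where "W \<in> entourages X Bs" and "\<forall>f\<in>F. \<forall>x y. (x, y) \<in> W \<longrightarrow> (f x, f y) \<in> V"
      using uec unfolding UEC_def by blast
    then show "\<exists>W\<in>Bs. \<forall>f\<in>F. \<forall>x y. (x, y) \<in> W \<longrightarrow> (f x, f y) \<in> V"
      unfolding entourages_def by blast
  qed
next
  assume base: "\<forall>V\<in>Bs. \<exists>W\<in>Bs. \<forall>f\<in>F. \<forall>x y. (x, y) \<in> W \<longrightarrow> (f x, f y) \<in> V"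
  show "UEC X Bs F"
    unfolding UEC_def
  proof
    fix U assume "U \<in> entourages X Bs"
    then obtain V where "V \<in> Bs" and VU: "V \<subseteq> U"
      by (auto simp: entourages_def)
    then obtain W where W: "W \<in> Bs" and WV: "\<forall>f\<in>F. \<forall>x y. (x, y) \<in> W \<longrightarrow> (f x, f y) \<in> V"
      using base by blast
    have "W \<in> entourages X Bs"
      using W assms by (auto simp: entourages_def)
    with WV VU show "\<exists>W\<in>entourages X Bs. \<forall>f\<in>F. \<forall>x y. (x, y) \<in> W \<longrightarrow> (f x, f y) \<in> U"
      by blast
  qed
qed

lemma UEC_weak_iff:
  "UEC (H1 ip) (weak_basic ip) F \<longleftrightarrow>
     (\<forall>V\<in>weak_basic ip. \<exists>W\<in>weak_basic ip. \<forall>f\<in>F. \<forall>x y. (x, y) \<in> W \<longrightarrow> (f x, f y) \<in> V)"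
  by (rule UEC_basic_iff) (auto simp: weak_basic_iff weak_ent_def)

lemma UEC_wot_iff:
  "UEC (B1 sc ip) (wot_basic sc ip) F \<longleftrightarrow>
     (\<forall>V\<in>wot_basic sc ip. \<exists>W\<in>wot_basic sc ip. \<forall>f\<in>F. \<forall>x y. (x, y) \<in> W \<longrightarrow> (f x, f y) \<in> V)"
  by (rule UEC_basic_iff) (auto simp: wot_basic_iff wot_ent_def)

context hilbert
begin

lemma rank_one_wot_ent:
  assumes xi: "hnorm ip \<xi> \<le> 1" and w: "\<forall>i<n. w i \<in> H1 ip" and xy: "(x, y) \<in> weak_ent ip z n \<delta>"
  shows "((\<lambda>v. sc (ip v \<xi>) x), (\<lambda>v. sc (ip v \<xi>) y)) \<in> wot_ent sc ip w z n \<delta>"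
proof -
  have x: "x \<in> H1 ip" and y: "y \<in> H1 ip" and small: "\<forall>i<n. cmod (ip (x - y) (z i)) < \<delta>"
    using xy by (auto simp: weak_ent_def)
  have "cmod (ip (sc (ip (w i) \<xi>) x - sc (ip (w i) \<xi>) y) (z i)) < \<delta>" if i: "i < n" for i
  proof -
    have "cmod (ip (sc (ip (w i) \<xi>) x - sc (ip (w i) \<xi>) y) (z i)) =
        cmod (ip (w i) \<xi>) * cmod (ip (x - y) (z i))"
      by (simp add: scale_right_diff_distrib[symmetric] ip_scale_left norm_mult)
    also have "\<dots> \<le> cmod (ip (x - y) (z i))"
      using cmod_ip_le_1[of "w i" \<xi>] w i xi by (simp add: H1_def mult_left_le_one_le)
    also have "\<dots> < \<delta>"
      using small i by blast
    finally show ?thesis .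
  qed
  then show ?thesis
    using rank_one_B1[OF xi] x y by (simp add: wot_ent_def H1_def)
qed

lemma wot_grid_basic:
  assumes E: "orthonormal m E" and "0 < \<delta>"
  shows "wot_ent sc ip (\<lambda>i. E (i div m)) (\<lambda>i. E (i mod m)) (m * m) \<delta> \<in> wot_basic sc ip"
proof -
  have "\<forall>i<m * m. E (i div m) \<in> H1 ip \<and> E (i mod m) \<in> H1 ip"
  proof (intro allI impI)
    fix i assume i: "i < m * m"
    have "0 < m"
      using i by (cases m) auto
    then have "i div m < m" "i mod m < m"
      using i by (simp_all add: less_mult_imp_div_less)
    then show "E (i div m) \<in> H1 ip \<and> E (i mod m) \<in> H1 ip"
      using orthonormal_hnorm[OF E] by (simp add: H1_def)
  qed
  then show ?thesis
    using assms(2) by (rule wot_ent_basic)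
qed

lemma wot_grid_entries:
  assumes "(A, B) \<in> wot_ent sc ip (\<lambda>i. E (i div m)) (\<lambda>i. E (i mod m)) (m * m) \<delta>"
    and l: "l < m" and k: "k < m"
  shows "cmod (ip (A (E l) - B (E l)) (E k)) < \<delta>"
proof -
  have "l * m + k < (l + 1) * m"
    using k by simp
  also have "\<dots> \<le> m * m"
    using l by (intro mult_right_mono) auto
  finally have "l * m + k < m * m" .
  moreover have "\<forall>i<m * m. cmod (ip (A (E (i div m)) - B (E (i div m))) (E (i mod m))) < \<delta>"
    using assms(1) by (simp add: wot_ent_def)
  ultimately have "cmod (ip (A (E ((l * m + k) div m)) - B (E ((l * m + k) div m)))
                       (E ((l * m + k) mod m))) < \<delta>"
    by blast
  moreover have "(l * m + k) div m = l" and "(l * m + k) mod m = k"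
    using k by auto
  ultimately show ?thesis
    by simp
qed

end

section \<open>The unitary group and its conjugation action\<close>

locale unitary_group = hilbert +
  fixes u
  assumes unitary_group: "one_param_unitary_group sc ip u"
begin

lemma u_module_hom: "module_hom sc sc (u t)"
  using unitary_group bounded_op_module_hom
  by (simp add: one_param_unitary_group_def unitary_op_def)

lemma ip_u: "ip (u t x) (u t y) = ip x y"
  using unitary_group by (simp add: one_param_unitary_group_def unitary_op_def)

lemma u_inverse: "u t (u (-t) x) = x"
proof -
  have "u (t + -t) = u t \<circ> u (-t)" and "u 0 = id"
    using unitary_group unfolding one_param_unitary_group_def by blast+
  then show ?thesis
    by (metis add.right_inverse comp_apply id_apply)
qed

lemma hnorm_u: "hnorm ip (u t x) = hnorm ip x"
  by (simp add: hnorm_def ip_u)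

lemma u_H1: "x \<in> H1 ip \<Longrightarrow> u t x \<in> H1 ip"
  by (simp add: H1_def hnorm_u)

lemma ip_u_adjoint: "ip (u t x) y = ip x (u (-t) y)"
  using ip_u[of t x "u (-t) y"] by (simp add: u_inverse)

lemma adjoint_u: "adjoint ip (u t) = u (-t)"
  unfolding adjoint_def
proof (rule the_equality)
  fix S assume S: "\<forall>x y. ip (u t x) y = ip x (S y)"
  show "S = u (-t)"
    using S ip_u_adjoint by (intro ext ip_ext) metis
qed (simp add: ip_u_adjoint)

definition alpha where
  "alpha t A = u t \<circ> A \<circ> adjoint ip (u t)"

lemma alpha_apply: "alpha t A x = u t (A (u (-t) x))"
  by (simp add: alpha_def adjoint_u)

lemma alpha_B1:
  assumes "A \<in> B1 sc ip"
  shows "alpha t A \<in> B1 sc ip"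
proof -
  have A: "module_hom sc sc A" "\<And>x. hnorm ip (A x) \<le> hnorm ip x"
    using assms by (auto simp: B1_iff)
  have "module_hom sc sc (u t \<circ> A \<circ> u (-t))"
    by (rule module_hom_compose[OF u_module_hom module_hom_compose[OF A(1) u_module_hom]])
  moreover have "hnorm ip ((u t \<circ> A \<circ> u (-t)) x) \<le> hnorm ip x" for x
    using A(2)[of "u (-t) x"] by (simp add: hnorm_u)
  ultimately show ?thesis
    by (simp add: B1_iff alpha_def adjoint_u)
qed

lemma ip_alpha: "ip (alpha t A x - alpha t B x) y = ip (A (u (-t) x) - B (u (-t) x)) (u (-t) y)"
  by (simp add: alpha_apply module_hom.diff[OF u_module_hom, symmetric] ip_u_adjoint)

section \<open>Uniform equicontinuity of the conjugation action implies that of the group\<close>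

text \<open>Fix a unit vector w0 and put xi = u_(-t) w0; then alpha_t maps the rank-one operator
  <., xi> p to an operator sending w0 to u_t p.\<close>
lemma alpha_rank_one: "hnorm ip w0 = 1 \<Longrightarrow> alpha t (\<lambda>v. sc (ip v (u (-t) w0)) p) w0 = u t p"
  using ip_self_hnorm[of w0] by (simp add: alpha_apply ip_u)

lemma group_UEC_of_alpha_UEC:
  assumes alpha_UEC: "UEC (B1 sc ip) (wot_basic sc ip) (range alpha)" and w0: "hnorm ip w0 = 1"
  shows "UEC (H1 ip) (weak_basic ip) (range u)"
  unfolding UEC_weak_iff
proof
  fix V assume "V \<in> weak_basic ip"
  then obtain z N e where z: "\<forall>i<N. z i \<in> H1 ip" and e: "0 < e" and V: "V = weak_ent ip z N e"
    unfolding weak_basic_iff by blast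
  have "\<forall>i<N. w0 \<in> H1 ip \<and> z i \<in> H1 ip"
    using z w0 by (simp add: H1_def)
  then have "wot_ent sc ip (\<lambda>_. w0) z N e \<in> wot_basic sc ip"
    using e by (rule wot_ent_basic)
  from bspec[OF alpha_UEC[unfolded UEC_wot_iff] this] obtain W where "W \<in> wot_basic sc ip"
    and W_alpha: "\<forall>f\<in>range alpha. \<forall>A B. (A, B) \<in> W \<longrightarrow> (f A, f B) \<in> wot_ent sc ip (\<lambda>_. w0) z N e"
    by blast
  have W: "(alpha t A, alpha t B) \<in> wot_ent sc ip (\<lambda>_. w0) z N e" if "(A, B) \<in> W" for t A B
    using W_alpha that by blast
  from \<open>W \<in> wot_basic sc ip\<close> obtain w2 z2 n \<delta> where wz2: "\<forall>i<n. w2 i \<in> H1 ip \<and> z2 i \<in> H1 ip" and \<delta>: "0 < \<delta>"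
    and W_eq: "W = wot_ent sc ip w2 z2 n \<delta>"
    unfolding wot_basic_iff by blast
  have "(u t x, u t y) \<in> V" if xy: "(x, y) \<in> weak_ent ip z2 n \<delta>" for t x y
  proof -
    have "((\<lambda>v. sc (ip v (u (-t) w0)) x), (\<lambda>v. sc (ip v (u (-t) w0)) y)) \<in> W"
      unfolding W_eq using wz2 xy w0 by (intro rank_one_wot_ent) (simp_all add: hnorm_u)
    from W[where t = t, OF this]
    have "\<forall>i<N. cmod (ip (u t x - u t y) (z i)) < e"
      by (simp add: wot_ent_def alpha_rank_one[OF w0])
    moreover have "u t x \<in> H1 ip" "u t y \<in> H1 ip"
      using xy u_H1 by (auto simp: weak_ent_def)
    ultimately show ?thesis
      by (simp add: V weak_ent_def)
  qed
  moreover have "weak_ent ip z2 n \<delta> \<in> weak_basic ip"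
    using wz2 \<delta> by (intro weak_ent_basic) simp_all
  ultimately show "\<exists>W\<in>weak_basic ip. \<forall>f\<in>range u. \<forall>x y. (x, y) \<in> W \<longrightarrow> (f x, f y) \<in> V"
    by blast
qed

section \<open>Uniform equicontinuity of the group implies that of the conjugation action\<close>

lemma uniform_residual:
  fixes M :: nat
  assumes u_UEC: "UEC (H1 ip) (weak_basic ip) (range u)"
    and y: "\<forall>i<M. y i \<in> H1 ip" and eps: "0 < \<epsilon>"
  obtains m E where "orthonormal m E"
    and "\<And>t i. i < M \<Longrightarrow> hnorm ip (u t (y i) - proj m E (u t (y i))) < \<epsilon>"
proof -
  have "weak_ent ip y M \<epsilon> \<in> weak_basic ip"
    using y eps by (rule weak_ent_basic)
  then obtain W where "W \<in> weak_basic ip"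
    and W: "\<And>t p q. (p, q) \<in> W \<Longrightarrow> (u t p, u t q) \<in> weak_ent ip y M \<epsilon>"
    using u_UEC unfolding UEC_weak_iff by blast
  then obtain f n \<delta> where \<delta>: "0 < \<delta>" and W_eq: "W = weak_ent ip f n \<delta>"
    unfolding weak_basic_iff by blast
  text \<open>Testing equicontinuity on the pairs (p, 0) with p orthogonal to all f_j:\<close>
  have small: "cmod (ip p (u t (y i))) < \<epsilon>"
    if p: "p \<in> H1 ip" "\<forall>j<n. ip p (f j) = 0" and i: "i < M" for p t i
  proof -
    have "(p, 0) \<in> W"
      using p \<delta> zero_in_H1 by (simp add: W_eq weak_ent_def)
    from W[OF this, of "-t"] have "cmod (ip (u (-t) p) (y i)) < \<epsilon>"
      using i module_hom.zero[OF u_module_hom] by (simp add: weak_ent_def)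
    then show ?thesis
      by (simp add: ip_u_adjoint)
  qed
  obtain m E where E: "orthonormal m E" and perp: "\<And>v. \<forall>k<m. ip v (E k) = 0 \<Longrightarrow> \<forall>j<n. ip v (f j) = 0"
    using gram_schmidt by blast
  show ?thesis
  proof (rule that[OF E])
    fix t i assume i: "i < M"
    show "hnorm ip (u t (y i) - proj m E (u t (y i))) < \<epsilon>"
      using small[OF _ perp i] by (rule residual_small[OF E eps])
  qed
qed

lemma alpha_UEC_of_group_UEC:
  assumes u_UEC: "UEC (H1 ip) (weak_basic ip) (range u)"
  shows "UEC (B1 sc ip) (wot_basic sc ip) (range alpha)"
  unfolding UEC_wot_iff
proof
  fix V assume "V \<in> wot_basic sc ip"
  then obtain w z N e where wz: "\<forall>i<N. w i \<in> H1 ip \<and> z i \<in> H1 ip" and e: "0 < e"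
    and V: "V = wot_ent sc ip w z N e"
    unfolding wot_basic_iff by blast
  define y where "y = (\<lambda>i. if i < N then w i else z (i - N))"
  define \<epsilon> where "\<epsilon> = e / 8"
  have y: "\<forall>i<2 * N. y i \<in> H1 ip"
    using wz by (simp add: y_def)
  have eps: "0 < \<epsilon>"
    using e by (simp add: \<epsilon>_def)
  obtain m E where E: "orthonormal m E"
    and close: "\<And>t i. i < 2 * N \<Longrightarrow> hnorm ip (u t (y i) - proj m E (u t (y i))) < \<epsilon>"
    using uniform_residual[OF u_UEC y eps] by blast
  define \<delta> where "\<delta> = e / (2 * (real (m * m) + 1))"
  have \<delta>: "0 < \<delta>"
    unfolding \<delta>_def using e by (intro divide_pos_pos mult_pos_pos add_nonneg_pos of_nat_0_le_iff) auto
  have budget: "4 * \<epsilon> + real (m * m) * \<delta> < e"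
  proof -
    have "real (m * m) * \<delta> = e / 2 * (real (m * m) / (real (m * m) + 1))"
      by (simp add: \<delta>_def field_simps)
    also have "\<dots> < e / 2 * 1"
    proof (rule mult_strict_left_mono)
      have "0 < real (m * m) + 1"
        using of_nat_0_le_iff[of "m * m"] by linarith
      then show "real (m * m) / (real (m * m) + 1) < 1"
        by (subst divide_less_eq_1_pos) simp_all
    qed (use e in simp)
    finally show ?thesis
      by (simp add: \<epsilon>_def)
  qed
  define W where "W = wot_ent sc ip (\<lambda>i. E (i div m)) (\<lambda>i. E (i mod m)) (m * m) \<delta>"
  have "(alpha t A, alpha t B) \<in> V" if AB: "(A, B) \<in> W" for t A B
  proof -
    have A: "A \<in> B1 sc ip" and B: "B \<in> B1 sc ip"
      using AB by (auto simp: W_def wot_ent_def)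
    have entries: "\<forall>l<m. \<forall>k<m. cmod (ip (A (E l) - B (E l)) (E k)) \<le> \<delta>"
      using wot_grid_entries AB unfolding W_def by (meson less_imp_le)
    have "cmod (ip (alpha t A (w i) - alpha t B (w i)) (z i)) < e" if i: "i < N" for i
    proof -
      have "cmod (ip (A (u (-t) (w i)) - B (u (-t) (w i))) (u (-t) (z i))) \<le> 4 * \<epsilon> + real (m * m) * \<delta>"
        using close[of i "-t"] close[of "N + i" "-t"] wz i
        by (intro wot_estimate[OF A B E _ _ _ _ entries])
           (simp_all add: y_def hnorm_u H1_def less_imp_le)
      then show ?thesis
        using budget by (simp add: ip_alpha)
    qed
    then show ?thesis
      using alpha_B1[OF A] alpha_B1[OF B] by (simp add: V wot_ent_def)
  qed
  moreover have "W \<in> wot_basic sc ip"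
    unfolding W_def by (rule wot_grid_basic[OF E \<delta>])
  ultimately show "\<exists>W\<in>wot_basic sc ip. \<forall>f\<in>range alpha. \<forall>A B. (A, B) \<in> W \<longrightarrow> (f A, f B) \<in> V"
    by blast
qed

end

theorem mainTheorem3:
  fixes sc :: "complex \<Rightarrow> 'h::ab_group_add \<Rightarrow> 'h"
    and ip :: "'h \<Rightarrow> 'h \<Rightarrow> complex"
    and u :: "real \<Rightarrow> 'h \<Rightarrow> 'h"
  assumes "hilbert_space sc ip"
    and "separable_hs ip"
    and "infinite_dimensional sc"
    and "one_param_unitary_group sc ip u"
  shows "UEC (H1 ip) (weak_basic ip) (range u) \<longleftrightarrow>
         UEC (B1 sc ip) (wot_basic sc ip)
             ((\<lambda>t. \<lambda>A. u t \<circ> A \<circ> adjoint ip (u t)) ` UNIV)"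
proof -
  interpret unitary_group sc ip u
    using assms(1,4) by (simp add: unitary_group_def unitary_group_axioms_def hilbert_def)
  obtain w0 where w0: "hnorm ip w0 = 1"
    using unit_vector_exists[OF assms(3)] by blast
  have "(\<lambda>t. \<lambda>A. u t \<circ> A \<circ> adjoint ip (u t)) = alpha"
    by (simp add: alpha_def fun_eq_iff)
  then show ?thesis
    using alpha_UEC_of_group_UEC group_UEC_of_alpha_UEC[OF _ w0] by (simp only:) blast
qed

end
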